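(* Let $\omega$ be a quasi-free Hadamard state of the free massless scalar field on four-dimensional Minkowski spacetime, and let $x$ be a point of Minkowski spacetime. Then $\omega$ is $\mathbf{T}_{2n}(x)$-thermal for all integers $n\geq 1$ if and only if it is $\mathbf{T}_{2}(x)$-thermal. As a consequence, a $\mathbf{T}_2(x)$-thermal quasi-free state has a sharp local temperature at $x$: any probability measure $\rho_x$ on $(0,\infty)$ witnessing its $\mathbf{T}_4(x)$-thermality is a Dirac measure.
   Context: Consider the free massless scalar field $\phi$ on Minkowski spacetime (signature $(-,+,+,+)$, units $k_B=1$). For $k\geq 0$ let $:\!\phi^{k}\!:(x)$ denote the Wick powers, defined by point splitting/normal ordering with respect to the Hadamard parametrix (in Minkowski spacetime no curvature renormalization terms appear). A state $\omega$ is quasi-free if its odd $n$-point functions vanish and its $2n$-point functions are given by the sum over all pairings of products of two-point functions; in a quasi-free Hadamard state $\omega(:\!\phi^{2n}\!:(x))=(2n-1)!!\,\omega(:\!\phi^2\!:(x))^n$. For $\beta>0$ let $\omega_\beta$ denote the (unique, quasi-free, translation-invariant) global thermal equilibrium (KMS) state at inverse temperature $\beta$ in a fixed Lorentz frame; it satisfies $\omega_\beta(:\!\phi^{2n}\!:(0))=\frac{(2n-1)!!}{12^n\beta^{2n}}$. For an integer $n\geq0$ let $\mathbf{T}_{2n}=\{\mathbf{1},:\!\phi^2\!:,\dots,:\!\phi^{2n}\!:\}$. A state $\omega$ is called $\mathbf{T}_{2n}(x)$-thermal if there exists a probability measure $\rho_x$ on $(0,\infty)$ such that $\omega(:\!\phi^{2k}\!:(x))=\int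 d\rho_x(\beta)\,\omega_\beta(:\!\phi^{2k}\!:(0))$ for all $k=0,1,\dots,n$ (with the integrals finite). The state is said to have a sharp local temperature at $x$ if the measure $\rho_x$ is a Dirac measure. *)

theory Defs
  imports "HOL-Probability.Probability"
begin

type_synonym mink_point = "real ^ 4"

text \<open>Odd double factorial: dfact_odd n = (2n-1)!!, with (-1)!! = 1.\<close>
definition dfact_odd :: "nat \<Rightarrow> real" where
  "dfact_odd n = (\<Prod>i<n. real (2 * i + 1))"

text \<open>A state is represented by its expectation values of the Wick powers:
  omega k x = omega(:phi^k:(x)).\<close>
type_synonym wick_state = "nat \<Rightarrow> mink_point \<Rightarrow> real"

text \<open>Consequences of quasi-freeness (with Hadamard point-split Wick powers) for the
  Wick-power expectation values at every point.\<close>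
definition quasi_free_hadamard :: "wick_state \<Rightarrow> bool" where
  "quasi_free_hadamard \<omega> \<longleftrightarrow>
     (\<forall>x n. \<omega> (2 * n) x = dfact_odd n * (\<omega> 2 x) ^ n) \<and>
     (\<forall>x n. \<omega> (2 * n + 1) x = 0)"

text \<open>KMS state value: omega_beta(:phi^(2k):(0)) = (2k-1)!! / (12^k beta^(2k)).\<close>
definition kms_wick :: "real \<Rightarrow> nat \<Rightarrow> real" where
  "kms_wick \<beta> k = dfact_odd k / (12 ^ k * \<beta> ^ (2 * k))"

definition pos_reals :: "real measure" where
  "pos_reals = restrict_space borel {0<..}"

definition thermal_witness :: "wick_state \<Rightarrow> mink_point \<Rightarrow> nat \<Rightarrow> real measure \<Rightarrow> bool" where
  "thermal_witness \<omega> x n \<rho> \<longleftrightarrow>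
     prob_space \<rho> \<and> sets \<rho> = sets pos_reals \<and>
     (\<forall>k\<le>n. integrable \<rho> (\<lambda>\<beta>. kms_wick \<beta> k) \<and>
             \<omega> (2 * k) x = (\<integral>\<beta>. kms_wick \<beta> k \<partial>\<rho>))"

definition T_thermal :: "wick_state \<Rightarrow> mink_point \<Rightarrow> nat \<Rightarrow> bool" where
  "T_thermal \<omega> x n \<longleftrightarrow> (\<exists>\<rho>. thermal_witness \<omega> x n \<rho>)"

definition is_dirac :: "real measure \<Rightarrow> bool" where
  "is_dirac \<rho> \<longleftrightarrow> (\<exists>\<beta>0>0. \<rho> = return pos_reals \<beta>0)"

end

theory Submission
  imports Defs
begin

text \<open>With \<open>Y(\<beta>) = 1/(12\<beta>\<^sup>2)\<close> the KMS values are \<open>\<omega>\<^sub>\<beta>(:\<phi>\<^sup>2\<^sup>k:) = (2k-1)!! Y(\<beta>)\<^sup>k\<close>.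
  A \<open>T\<^sub>2(x)\<close>-witness makes \<open>u = \<omega>(:\<phi>\<^sup>2:(x))\<close> the mean of the positive variable \<open>Y\<close>, so
  \<open>u > 0\<close>, and by quasi-freeness the Dirac measure at the \<open>\<beta>\<close> with \<open>Y(\<beta>) = u\<close> is a
  \<open>T\<^sub>2\<^sub>n(x)\<close>-witness for every \<open>n\<close>. Conversely, for a \<open>T\<^sub>4(x)\<close>-witness quasi-freeness gives
  \<open>E[Y\<^sup>2] = \<omega>(:\<phi>\<^sup>4:(x))/3 = u\<^sup>2 = E[Y]\<^sup>2\<close>: \<open>Y\<close> has variance zero, so \<open>\<beta>\<close> is almost surely
  constant and the witness is a Dirac measure.\<close>

lemma (in prob_space) expectation_pos:
  fixes f :: "'a \<Rightarrow> real"
  assumes f: "integrable M f" and pos: "AE x in M. 0 < f x"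
  shows "0 < expectation f"
proof -
  have nonneg: "AE x in M. 0 \<le> f x" using pos by eventually_elim simp
  have "expectation f \<noteq> 0"
  proof
    assume "expectation f = 0"
    then have "AE x in M. f x = 0"
      using integral_nonneg_eq_0_iff_AE[OF f nonneg] by simp
    with pos have "AE x in M. False" by eventually_elim simp
    then show False by (simp add: AE_False)
  qed
  with integral_nonneg_AE[OF nonneg] show ?thesis by simp
qed

lemma (in prob_space) AE_eq_expectation_of_variance_zero:
  fixes X :: "'a \<Rightarrow> real"
  assumes X: "integrable M X" and X2: "integrable M (\<lambda>x. (X x)\<^sup>2)" and "variance X = 0"
  shows "AE x in M. X x = expectation X"
proof -
  have square: "integrable M (\<lambda>x. (X x - expectation X)\<^sup>2)"
    unfolding power2_diff by (intro Bochner_Integration.integrable_diff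
        Bochner_Integration.integrable_add integrable_mult_left integrable_mult_right X X2) simp
  then have "AE x in M. (X x - expectation X)\<^sup>2 = 0"
    using integral_nonneg_eq_0_iff_AE[OF square] \<open>variance X = 0\<close> by simp
  then show ?thesis by simp
qed

lemma (in prob_space) eq_return_of_AE_eq:
  assumes sets_eq: "sets M = sets N" and "AE x in M. x = b"
  shows "M = return N b"
proof (rule measure_eqI)
  show "sets M = sets (return N b)" using sets_eq by simp
next
  fix A assume A: "A \<in> sets M"
  show "emeasure M A = emeasure (return N b) A"
  proof (cases "b \<in> A")
    case True
    have "emeasure M A = emeasure M (space M)"
      by (rule emeasure_eq_AE) (use \<open>AE x in M. x = b\<close> True A in auto)
    then show ?thesis using True A sets_eq by (simp add: emeasure_space_1)
  next
    case False
    have "emeasure M A = emeasure M {}"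
      by (rule emeasure_eq_AE) (use \<open>AE x in M. x = b\<close> False A in auto)
    then show ?thesis using False A sets_eq by simp
  qed
qed

lemma space_pos_reals [simp]: "space pos_reals = {0<..}"
  by (simp add: pos_reals_def space_restrict_space)

lemma measurable_kms_wick [measurable]:
  "(\<lambda>\<beta>. kms_wick \<beta> k) \<in> borel_measurable pos_reals"
  unfolding pos_reals_def by (rule measurable_restrict_space1) (simp add: kms_wick_def)

lemma kms_wick_eq: "kms_wick \<beta> k = dfact_odd k * (1 / (12 * \<beta>\<^sup>2)) ^ k"
  by (simp add: kms_wick_def power_mult power_mult_distrib power_divide)

lemma kms_wick_pos: "\<beta> > 0 \<Longrightarrow> kms_wick \<beta> k > 0"
  by (simp add: kms_wick_def dfact_odd_def prod_pos)

lemma kms_wick_1: "kms_wick \<beta> 1 = 1 / (12 * \<beta>\<^sup>2)"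
  by (simp add: kms_wick_eq dfact_odd_def)

lemma dfact_odd_2: "dfact_odd 2 = 3"
  by (simp add: dfact_odd_def numeral_2_eq_2)

lemma kms_wick_2: "kms_wick \<beta> 2 = 3 * (1 / (12 * \<beta>\<^sup>2))\<^sup>2"
  by (simp add: kms_wick_eq dfact_odd_2)

text \<open>The \<open>\<beta>\<close> with \<open>\<omega>\<^sub>\<beta>(:\<phi>\<^sup>2:) = u\<close>.\<close>
definition kms_inverse_temperature :: "real \<Rightarrow> real" where
  "kms_inverse_temperature u = 1 / sqrt (12 * u)"

lemma kms_inverse_temperature_pos: "u > 0 \<Longrightarrow> kms_inverse_temperature u > 0"
  by (simp add: kms_inverse_temperature_def)

lemma kms_wick_kms_inverse_temperature:
  assumes "u > 0"
  shows "kms_wick (kms_inverse_temperature u) k = dfact_odd k * u ^ k"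
  using assms by (simp add: kms_wick_eq kms_inverse_temperature_def power_divide)

lemma kms_inverse_temperature_unique:
  assumes "\<beta> > 0" and "1 / (12 * \<beta>\<^sup>2) = u"
  shows "\<beta> = kms_inverse_temperature u"
proof -
  have "12 * u = (1 / \<beta>)\<^sup>2" using assms(2) by (auto simp: power_divide)
  then have "sqrt (12 * u) = 1 / \<beta>" using assms(1) by simp
  then show ?thesis by (simp add: kms_inverse_temperature_def)
qed

lemma thermal_witness_prob_space: "thermal_witness \<omega> x n \<rho> \<Longrightarrow> prob_space \<rho>"
  unfolding thermal_witness_def by blast

lemma sets_thermal_witness: "thermal_witness \<omega> x n \<rho> \<Longrightarrow> sets \<rho> = sets pos_reals"
  unfolding thermal_witness_def by blast

lemma space_thermal_witness: "thermal_witness \<omega> x n \<rho> \<Longrightarrow> space \<rho> = {0<..}"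
  using sets_eq_imp_space_eq[OF sets_thermal_witness] by simp

lemma thermal_witness_moment:
  assumes "thermal_witness \<omega> x n \<rho>" and "k \<le> n"
  shows "integrable \<rho> (\<lambda>\<beta>. kms_wick \<beta> k)" and "\<omega> (2 * k) x = (\<integral>\<beta>. kms_wick \<beta> k \<partial>\<rho>)"
  using assms unfolding thermal_witness_def by blast+

lemma thermal_witness_return:
  assumes "\<beta> > 0" and "\<And>k. k \<le> n \<Longrightarrow> \<omega> (2 * k) x = kms_wick \<beta> k"
  shows "thermal_witness \<omega> x n (return pos_reals \<beta>)"
proof -
  have \<beta>: "\<beta> \<in> space pos_reals" using assms(1) by simp
  interpret prob_space "return pos_reals \<beta>" by (rule prob_space_return[OF \<beta>])
  have integrable: "integrable (return pos_reals \<beta>) (\<lambda>\<beta>'. kms_wick \<beta>' k)" for k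
  proof (rule integrable_const_bound)
    show "AE \<beta>' in return pos_reals \<beta>. norm (kms_wick \<beta>' k) \<le> norm (kms_wick \<beta> k)"
      using \<beta> by (subst AE_return) auto
  qed simp
  show ?thesis
    unfolding thermal_witness_def
  proof (intro conjI allI impI)
    fix k assume "k \<le> n"
    show "\<omega> (2 * k) x = (\<integral>\<beta>'. kms_wick \<beta>' k \<partial>return pos_reals \<beta>)"
      using assms(2)[OF \<open>k \<le> n\<close>] by (simp add: integral_return[OF \<beta> measurable_kms_wick])
  qed (simp_all add: prob_space_return[OF \<beta>] integrable)
qed

lemma thermal_witness_wick_square_pos:
  assumes w: "thermal_witness \<omega> x n \<rho>" and "n \<ge> 1"
  shows "\<omega> 2 x > 0"
proof -
  interpret prob_space \<rho> by (rule thermal_witness_prob_space[OF w])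
  have "AE \<beta> in \<rho>. 0 < kms_wick \<beta> 1"
    by (intro AE_I2) (simp add: space_thermal_witness[OF w] kms_wick_pos)
  with thermal_witness_moment[OF w \<open>n \<ge> 1\<close>] show ?thesis
    using expectation_pos by simp
qed

lemma quasi_free_hadamard_wick_even:
  "quasi_free_hadamard \<omega> \<Longrightarrow> \<omega> (2 * n) x = dfact_odd n * (\<omega> 2 x) ^ n"
  unfolding quasi_free_hadamard_def by blast

lemma quasi_free_hadamard_thermal_witness:
  assumes "quasi_free_hadamard \<omega>" and "\<omega> 2 x > 0"
  shows "thermal_witness \<omega> x n (return pos_reals (kms_inverse_temperature (\<omega> 2 x)))"
  using assms by (intro thermal_witness_return)
    (simp_all only: kms_inverse_temperature_pos kms_wick_kms_inverse_temperature
      quasi_free_hadamard_wick_even)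

lemma quasi_free_hadamard_thermal_witness_is_dirac:
  assumes qf: "quasi_free_hadamard \<omega>" and w: "thermal_witness \<omega> x 2 \<rho>"
  shows "is_dirac \<rho>"
proof -
  interpret prob_space \<rho> by (rule thermal_witness_prob_space[OF w])
  define u where "u = \<omega> 2 x"
  have u: "u > 0" unfolding u_def by (rule thermal_witness_wick_square_pos[OF w]) simp
  define Y where "Y = (\<lambda>\<beta>::real. 1 / (12 * \<beta>\<^sup>2))"
  have Y: "integrable \<rho> Y" "expectation Y = u"
    using thermal_witness_moment[OF w, of 1] unfolding kms_wick_1 Y_def u_def by auto
  have Y2_scaled: "integrable \<rho> (\<lambda>\<beta>. 3 * (Y \<beta>)\<^sup>2)"
      "expectation (\<lambda>\<beta>. 3 * (Y \<beta>)\<^sup>2) = \<omega> (2 * 2) x"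
    using thermal_witness_moment[OF w, of 2] unfolding kms_wick_2 Y_def by auto
  have "\<omega> (2 * 2) x = 3 * u\<^sup>2"
    using quasi_free_hadamard_wick_even[OF qf, of 2 x] unfolding u_def dfact_odd_2 .
  with Y2_scaled have Y2: "integrable \<rho> (\<lambda>\<beta>. (Y \<beta>)\<^sup>2)" "expectation (\<lambda>\<beta>. (Y \<beta>)\<^sup>2) = u\<^sup>2"
    by simp_all
  have "variance Y = 0" using variance_eq[OF Y(1) Y2(1)] Y(2) Y2(2) by simp
  then have "AE \<beta> in \<rho>. Y \<beta> = u"
    using AE_eq_expectation_of_variance_zero[OF Y(1) Y2(1)] Y(2) by simp
  then have "AE \<beta> in \<rho>. \<beta> = kms_inverse_temperature u"
    using AE_space
  proof eventually_elim
    case (elim \<beta>)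
    then show ?case
      unfolding Y_def space_thermal_witness[OF w] by (intro kms_inverse_temperature_unique) auto
  qed
  then have "\<rho> = return pos_reals (kms_inverse_temperature u)"
    by (rule eq_return_of_AE_eq[OF sets_thermal_witness[OF w]])
  then show ?thesis
    unfolding is_dirac_def using kms_inverse_temperature_pos[OF u] by blast
qed

theorem proposition1:
  fixes \<omega> :: wick_state and x :: mink_point
  assumes "quasi_free_hadamard \<omega>"
  shows "((\<forall>n\<ge>1. T_thermal \<omega> x n) \<longleftrightarrow> T_thermal \<omega> x 1) \<and>
         (T_thermal \<omega> x 1 \<longrightarrow>
            T_thermal \<omega> x 2 \<and> (\<forall>\<rho>. thermal_witness \<omega> x 2 \<rho> \<longrightarrow> is_dirac \<rho>))"
proof -
  have "T_thermal \<omega> x n" if "T_thermal \<omega> x 1" for n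
  proof -
    from that obtain \<rho> where "thermal_witness \<omega> x 1 \<rho>" unfolding T_thermal_def by blast
    then have "\<omega> 2 x > 0" by (rule thermal_witness_wick_square_pos) simp
    then show ?thesis
      unfolding T_thermal_def using quasi_free_hadamard_thermal_witness[OF assms] by blast
  qed
  then show ?thesis using quasi_free_hadamard_thermal_witness_is_dirac[OF assms] by blast
qed

end
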